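(* For every graph $G$, $\operatorname{reg}(G)\le \Delta(G)\,\operatorname{im}(G)$, where $\Delta(G)$ is the maximum degree.
   Context: $\operatorname{reg}(G)=\max\{j\ge0:\widetilde H_{j-1}(\operatorname{Ind}(G[S]);\Bbbk)\neq0\text{ for some }S\subseteq V(G)\}$ over a field $\Bbbk$ ($\operatorname{Ind}$ = independence complex). $\operatorname{im}(G)$ is the induced matching number. *)

theory Defs
  imports Main
begin

definition simple_graph :: "'a set \<Rightarrow> 'a set set \<Rightarrow> bool" where
  "simple_graph V E \<longleftrightarrow> finite V \<and> (\<forall>e\<in>E. e \<subseteq> V \<and> card e = 2)"

definition degree :: "'a set set \<Rightarrow> 'a \<Rightarrow> nat" where
  "degree E v = card {u. {u, v} \<in> E}"

definition max_degree :: "'a set \<Rightarrow> 'a set set \<Rightarrow> nat" where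
  "max_degree V E = (if V = {} then 0 else Max (degree E ` V))"

text \<open>Induced matching: pairwise disjoint edges such that every edge of G
  inside their union is one of them (no edge of G joins two of them).\<close>
definition induced_matching :: "'a set set \<Rightarrow> 'a set set \<Rightarrow> bool" where
  "induced_matching E M \<longleftrightarrow> M \<subseteq> E \<and>
     (\<forall>e\<in>M. \<forall>f\<in>M. e \<noteq> f \<longrightarrow> e \<inter> f = {}) \<and>
     (\<forall>e\<in>E. e \<subseteq> \<Union>M \<longrightarrow> e \<in> M)"

definition induced_matching_number :: "'a set set \<Rightarrow> nat" where
  "induced_matching_number E = Max (card ` {M. induced_matching E M})"

text \<open>Independence complex of the induced subgraph G[S] (includes the empty face).\<close>
definition ind_complex :: "'a set set \<Rightarrow> 'a set \<Rightarrow> 'a set set" where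
  "ind_complex E S = {\<sigma>. \<sigma> \<subseteq> S \<and> (\<forall>e\<in>E. \<not> e \<subseteq> \<sigma>)}"

text \<open>Augmented simplicial chains over a field: a d-chain is a function on faces
  supported on faces of K with d+1 vertices (the empty face lives in degree -1).
  Simplices are oriented by the linear order of the vertices.\<close>
definition chains :: "'a set set \<Rightarrow> int \<Rightarrow> ('a set \<Rightarrow> 'k::field) set" where
  "chains K d = {c. \<forall>\<sigma>. c \<sigma> \<noteq> 0 \<longrightarrow> \<sigma> \<in> K \<and> int (card \<sigma>) = d + 1}"

definition bdry :: "'a::linorder set set \<Rightarrow> ('a set \<Rightarrow> 'k::field) \<Rightarrow> ('a set \<Rightarrow> 'k)" where
  "bdry K c \<tau> = (if \<tau> \<in> K then
      (\<Sum>v\<in>\<Union>K - \<tau>. if insert v \<tau> \<in> K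
          then (-1) ^ card {u\<in>\<tau>. u < v} * c (insert v \<tau>) else 0)
    else 0)"

definition red_homology_nonzero :: "'k::field itself \<Rightarrow> 'a::linorder set set \<Rightarrow> int \<Rightarrow> bool" where
  "red_homology_nonzero _ K d \<longleftrightarrow>
     (\<exists>z\<in>(chains K d :: ('a set \<Rightarrow> 'k) set). bdry K z = (\<lambda>_. 0) \<and>
        (\<forall>b\<in>(chains K (d + 1) :: ('a set \<Rightarrow> 'k) set). bdry K b \<noteq> z))"

definition reg :: "'k::field itself \<Rightarrow> 'a::linorder set \<Rightarrow> 'a set set \<Rightarrow> nat" where
  "reg k V E = Max {j. \<exists>S\<subseteq>V. red_homology_nonzero k (ind_complex E S) (int j - 1)}"

end

theory Submission
  imports Defs
begin

text \<open>For a vertex w of G[S], the independence complex of G[S - w] is the deletion of w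
  from Ind(G[S]) and that of G[S - N[w]] is its link, so the long exact sequence of the
  pair gives: if the reduced homology of Ind(G[S]) is nonzero in degree d, then so is that of
  Ind(G[S - w]) in degree d, or that of Ind(G[S - N[w]]) in degree d - 1, the latter only when
  w has a neighbour in S. Now fix a vertex u and delete its at most \<Delta> neighbours one at a
  time. Either the homology survives in G[W - N(u)], or at some neighbour w it passes to an
  induced subgraph G[Y] avoiding N[u] and N[w], having lost at most \<Delta> degrees; then the
  edge uw extends every induced matching of G[Y]. Induction on the number of vertices gives
  reg(G[W]) \<le> \<Delta> im(G[W]).\<close>

definition simplicial_complex :: "'a set set \<Rightarrow> bool" where
  "simplicial_complex K \<longleftrightarrow> finite (\<Union>K) \<and> (\<forall>\<sigma>\<in>K. \<forall>\<tau>\<subseteq>\<sigma>. \<tau> \<in> K)"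

definition deletion :: "'a set set \<Rightarrow> 'a \<Rightarrow> 'a set set" where
  "deletion K w = {\<sigma>\<in>K. w \<notin> \<sigma>}"

definition link :: "'a set set \<Rightarrow> 'a \<Rightarrow> 'a set set" where
  "link K w = {\<sigma>. w \<notin> \<sigma> \<and> insert w \<sigma> \<in> K}"

lemma simplicial_complex_finite_faces:
  "simplicial_complex K \<Longrightarrow> \<sigma> \<in> K \<Longrightarrow> finite \<sigma>"
  unfolding simplicial_complex_def by (meson Union_upper finite_subset)

lemma simplicial_complex_subset:
  "simplicial_complex K \<Longrightarrow> \<sigma> \<in> K \<Longrightarrow> \<tau> \<subseteq> \<sigma> \<Longrightarrow> \<tau> \<in> K"
  unfolding simplicial_complex_def by blast

lemma deletion_subset: "deletion K w \<subseteq> K"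
  unfolding deletion_def by blast

lemma link_subset_deletion: "simplicial_complex K \<Longrightarrow> link K w \<subseteq> deletion K w"
  unfolding link_def deletion_def by (auto intro: simplicial_complex_subset)

lemma apex_notin_link: "w \<notin> \<Union>(link K w)"
  unfolding link_def by blast

lemma simplicial_complex_deletion:
  assumes "simplicial_complex K" shows "simplicial_complex (deletion K w)"
proof -
  have "finite (\<Union>(deletion K w))"
    using assms deletion_subset unfolding simplicial_complex_def by (meson Union_mono finite_subset)
  then show ?thesis
    using assms unfolding simplicial_complex_def deletion_def by blast
qed

lemma simplicial_complex_link:
  assumes "simplicial_complex K" shows "simplicial_complex (link K w)"
proof -
  have "\<Union>(link K w) \<subseteq> \<Union>K" unfolding link_def by blast
  then have "finite (\<Union>(link K w))"
    using assms unfolding simplicial_complex_def by (meson finite_subset)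
  moreover have "\<tau> \<in> link K w" if "\<sigma> \<in> link K w" "\<tau> \<subseteq> \<sigma>" for \<sigma> \<tau>
  proof -
    have "insert w \<tau> \<subseteq> insert w \<sigma>" using that(2) by blast
    then show ?thesis
      using that assms unfolding link_def by (blast intro: simplicial_complex_subset)
  qed
  ultimately show ?thesis unfolding simplicial_complex_def by blast
qed

definition incidence_sign :: "'a::linorder \<Rightarrow> 'a set \<Rightarrow> 'k::field" where
  "incidence_sign v \<tau> = (-1) ^ card {u\<in>\<tau>. u < v}"

lemma incidence_sign_square: "incidence_sign v \<tau> * incidence_sign v \<tau> = (1::'k::field)"
  unfolding incidence_sign_def by (simp add: power_add[symmetric] flip: mult_2)

lemma incidence_sign_nonzero: "incidence_sign v \<tau> \<noteq> (0::'k::field)"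
  unfolding incidence_sign_def by simp

lemma card_less_insert:
  assumes "finite A" "x \<notin> A"
  shows "card {u\<in>insert x A. u < v} = card {u\<in>A. u < v} + (if x < v then 1 else 0)"
proof (cases "x < v")
  case True
  then have "{u\<in>insert x A. u < v} = insert x {u\<in>A. u < v}" by auto
  then show ?thesis using True assms by simp
next
  case False
  then have "{u\<in>insert x A. u < v} = {u\<in>A. u < v}" by auto
  then show ?thesis using False by simp
qed

text \<open>Exactly one of the two vertices precedes the other, so exchanging the order in
  which they are added flips the sign: this is why the boundary of a cone anticommutes
  with coning.\<close>
lemma incidence_sign_insert_swap:
  fixes v w :: "'a::linorder"
  assumes "finite A" "v \<notin> A" "w \<notin> A" "v \<noteq> w"
  shows "incidence_sign v (insert w A) * incidence_sign w (insert v A)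
    = - (incidence_sign w A * incidence_sign v A :: 'k::field)"
proof -
  have "w < v \<or> v < w" using assms(4) by auto
  then show ?thesis
    unfolding incidence_sign_def card_less_insert[OF assms(1,3)] card_less_insert[OF assms(1,2)]
    by (auto simp: power_add)
qed

lemma bdry_eq:
  "bdry K c \<tau> = (if \<tau> \<in> K then
      (\<Sum>v\<in>\<Union>K - \<tau>. if insert v \<tau> \<in> K then incidence_sign v \<tau> * c (insert v \<tau>) else 0)
    else 0)"
  unfolding bdry_def incidence_sign_def by simp

lemma bdry_outside: "\<tau> \<notin> K \<Longrightarrow> bdry K c \<tau> = 0"
  by (simp add: bdry_def)

lemma bdry_zero: "bdry K (\<lambda>_. 0::'k::field) = (\<lambda>_. 0)"
  by (rule ext) (simp add: bdry_def if_distrib cong: if_cong)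

lemma bdry_add:
  "bdry K (\<lambda>\<sigma>. f \<sigma> + g \<sigma>) = (\<lambda>\<tau>. bdry K f \<tau> + bdry K (g::_ \<Rightarrow> 'k::field) \<tau>)"
  by (rule ext) (auto simp: bdry_def ring_distribs simp flip: sum.distrib intro!: sum.cong)

lemma bdry_uminus: "bdry K (\<lambda>\<sigma>. - f \<sigma>) = (\<lambda>\<tau>. - bdry K (f::_ \<Rightarrow> 'k::field) \<tau>)"
  by (rule ext) (auto simp: bdry_def simp flip: sum_negf intro!: sum.cong)

lemma bdry_diff:
  "bdry K (\<lambda>\<sigma>. f \<sigma> - g \<sigma>) = (\<lambda>\<tau>. bdry K f \<tau> - bdry K (g::_ \<Rightarrow> 'k::field) \<tau>)"
  using bdry_add[of K f "\<lambda>\<sigma>. - g \<sigma>"] bdry_uminus[of K g] by simp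

lemma chains_nonzero: "c \<in> chains K d \<Longrightarrow> c \<sigma> \<noteq> 0 \<Longrightarrow> \<sigma> \<in> K"
  unfolding chains_def by auto

lemma chains_add:
  "f \<in> chains K d \<Longrightarrow> g \<in> chains K d \<Longrightarrow> (\<lambda>\<sigma>. f \<sigma> + g \<sigma>) \<in> chains K d"
  unfolding chains_def by (smt (verit, ccfv_threshold) add.right_neutral add_0 mem_Collect_eq)

lemma chains_uminus: "f \<in> chains K d \<Longrightarrow> (\<lambda>\<sigma>. - f \<sigma>) \<in> chains K d"
  unfolding chains_def by auto

lemma chains_diff:
  "f \<in> chains K d \<Longrightarrow> g \<in> chains K d \<Longrightarrow> (\<lambda>\<sigma>. f \<sigma> - g \<sigma>) \<in> chains K d"
  using chains_add[of f K d "\<lambda>\<sigma>. - g \<sigma>"] chains_uminus[of g K d] by simp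

lemma chains_mono: "K1 \<subseteq> K2 \<Longrightarrow> chains K1 d \<subseteq> chains K2 d"
  unfolding chains_def by auto

lemma bdry_subcomplex:
  assumes "simplicial_complex L" "L \<subseteq> K" "finite (\<Union>K)" and c: "c \<in> chains L d"
  shows "bdry K c = bdry L (c::_ \<Rightarrow> 'k::field)"
proof (rule ext)
  fix \<tau>
  let ?term = "\<lambda>K v. if insert v \<tau> \<in> K then incidence_sign v \<tau> * c (insert v \<tau>) else (0::'k)"
  have term_eq: "?term K v = ?term L v" for v
    using assms(2) chains_nonzero[OF c, of "insert v \<tau>"] by auto
  show "bdry K c \<tau> = bdry L c \<tau>"
  proof (cases "\<tau> \<in> L")
    case True
    have "(\<Sum>v\<in>\<Union>K - \<tau>. ?term K v) = (\<Sum>v\<in>\<Union>L - \<tau>. ?term L v)"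
      by (rule sum.mono_neutral_cong_right) (use assms(2,3) term_eq in auto)
    then show ?thesis using True assms(2) by (auto simp: bdry_eq)
  next
    case False
    then have "?term K v = 0" for v
      using term_eq assms(1) by (auto intro: simplicial_complex_subset)
    then show ?thesis using False by (simp add: bdry_eq)
  qed
qed

definition cone :: "'a::linorder \<Rightarrow> ('a set \<Rightarrow> 'k::field) \<Rightarrow> 'a set \<Rightarrow> 'k" where
  "cone w b \<sigma> = (if w \<in> \<sigma> then incidence_sign w (\<sigma> - {w}) * b (\<sigma> - {w}) else 0)"

lemma cone_insert: "w \<notin> \<tau> \<Longrightarrow> cone w b (insert w \<tau>) = incidence_sign w \<tau> * b \<tau>"
  by (simp add: cone_def)

lemma cone_apex_free: "w \<notin> \<sigma> \<Longrightarrow> cone w b \<sigma> = 0"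
  by (simp add: cone_def)

lemma cone_in_chains:
  assumes K: "simplicial_complex K" and c: "c \<in> chains (link K w) d"
  shows "cone w c \<in> chains K (d + 1)"
  unfolding chains_def
proof (intro CollectI allI impI)
  fix \<sigma> :: "'a set" assume "cone w c \<sigma> \<noteq> 0"
  then have w: "w \<in> \<sigma>" and "c (\<sigma> - {w}) \<noteq> 0" by (auto simp: cone_def split: if_splits)
  then have "\<sigma> - {w} \<in> link K w" and card: "int (card (\<sigma> - {w})) = d + 1"
    using c unfolding chains_def by auto
  then have "\<sigma> \<in> K" using w by (simp add: link_def insert_absorb)
  moreover have "card \<sigma> = Suc (card (\<sigma> - {w}))"
    using card_Suc_Diff1[OF simplicial_complex_finite_faces[OF K \<open>\<sigma> \<in> K\<close>] w] by simp
  ultimately show "\<sigma> \<in> K \<and> int (card \<sigma>) = d + 1 + 1" using card by simp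
qed

lemma bdry_cone_apex_free:
  assumes K: "simplicial_complex K" and b: "b \<in> chains (link K w) d" and w: "w \<notin> \<tau>"
  shows "bdry K (cone w b) \<tau> = (b \<tau> :: 'k::field)"
proof -
  let ?g = "\<lambda>v. if insert v \<tau> \<in> K then incidence_sign v \<tau> * cone w b (insert v \<tau>) else (0::'k)"
  have g_eq: "?g = (\<lambda>v. if v = w then b \<tau> else 0)"
  proof
    fix v
    show "?g v = (if v = w then b \<tau> else 0)"
    proof (cases "v = w")
      case True
      have "b \<tau> = 0" if "insert w \<tau> \<notin> K"
        using that chains_nonzero[OF b, of \<tau>] w by (auto simp: link_def)
      then show ?thesis
        using True w by (simp add: cone_insert mult.assoc[symmetric] incidence_sign_square)
    qed (use w in \<open>simp add: cone_apex_free\<close>)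
  qed
  have b_outside: "b \<tau> = 0" if "w \<notin> \<Union>K \<or> \<tau> \<notin> K"
    using that chains_nonzero[OF b, of \<tau>] w K by (auto simp: link_def intro: simplicial_complex_subset)
  have "finite (\<Union>K - \<tau>)" using K by (simp add: simplicial_complex_def)
  then have "(\<Sum>v\<in>\<Union>K - \<tau>. ?g v) = (if w \<in> \<Union>K - \<tau> then b \<tau> else 0)"
    by (simp only: g_eq sum.delta)
  then show ?thesis using w b_outside by (auto simp: bdry_eq)
qed

lemma bdry_cone_apex:
  assumes K: "simplicial_complex K" and b: "b \<in> chains (link K w) d" and w: "w \<in> \<tau>"
  shows "bdry K (cone w b) \<tau> = - cone w (bdry (link K w) (b :: _ \<Rightarrow> 'k::field)) \<tau>"
proof -
  let ?L = "link K w"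
  define \<tau>0 where "\<tau>0 = \<tau> - {w}"
  have \<tau>: "\<tau> = insert w \<tau>0" "w \<notin> \<tau>0" using w by (auto simp: \<tau>0_def)
  have b_outside: "b \<sigma> = 0" if "\<sigma> \<notin> ?L" for \<sigma> using chains_nonzero[OF b] that by blast
  show ?thesis
  proof (cases "\<tau> \<in> K")
    case False
    then have "\<tau>0 \<notin> ?L" using \<tau> by (simp add: link_def)
    then show ?thesis using False \<tau> by (simp add: bdry_outside cone_insert)
  next
    case True
    have \<tau>0L: "\<tau>0 \<in> ?L" using True \<tau> by (simp add: link_def)
    have fin: "finite \<tau>0" "finite (\<Union>K - \<tau>)"
      using True K simplicial_complex_finite_faces[OF K True] \<tau>
      by (auto simp: simplicial_complex_def)
    have "bdry K (cone w b) \<tau> = (\<Sum>v\<in>\<Union>K - \<tau>.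
        if insert v \<tau> \<in> K then incidence_sign v \<tau> * cone w b (insert v \<tau>) else 0)"
      using True by (simp add: bdry_eq)
    also have "\<dots> = (\<Sum>v\<in>\<Union>?L - \<tau>0. - incidence_sign w \<tau>0 *
        (if insert v \<tau>0 \<in> ?L then incidence_sign v \<tau>0 * b (insert v \<tau>0) else 0))"
    proof (rule sum.mono_neutral_cong_right[OF fin(2)])
      show "\<Union>?L - \<tau>0 \<subseteq> \<Union>K - \<tau>" using \<tau> unfolding link_def by blast
    next
      show "\<forall>v\<in>\<Union>K - \<tau> - (\<Union>?L - \<tau>0).
          (if insert v \<tau> \<in> K then incidence_sign v \<tau> * cone w b (insert v \<tau>) else 0) = 0"
      proof
        fix v assume v: "v \<in> \<Union>K - \<tau> - (\<Union>?L - \<tau>0)"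
        then have "insert v \<tau>0 \<notin> ?L" "v \<noteq> w" using \<tau> by auto
        then have "cone w b (insert v \<tau>) = 0"
          using \<tau> b_outside insert_commute[of v w \<tau>0] by (simp add: cone_insert)
        then show "(if insert v \<tau> \<in> K then incidence_sign v \<tau> * cone w b (insert v \<tau>) else 0) = 0"
          by simp
      qed
    next
      fix v assume v: "v \<in> \<Union>?L - \<tau>0"
      then have vw: "v \<noteq> w" and v\<tau>0: "v \<notin> \<tau>0" using apex_notin_link[of w K] by blast+
      have inL: "insert v \<tau>0 \<in> ?L \<longleftrightarrow> insert v \<tau> \<in> K"
        using \<tau> vw by (simp add: link_def insert_commute)
      have "incidence_sign v \<tau> * cone w b (insert v \<tau>)
          = (incidence_sign v (insert w \<tau>0) * incidence_sign w (insert v \<tau>0)) * b (insert v \<tau>0)"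
        using \<tau> vw v\<tau>0 insert_commute[of v w \<tau>0] by (simp add: cone_insert mult.assoc)
      also have "\<dots> = - incidence_sign w \<tau>0 * (incidence_sign v \<tau>0 * b (insert v \<tau>0))"
        by (simp only: incidence_sign_insert_swap[OF fin(1) v\<tau>0 \<tau>(2) vw] mult.assoc minus_mult_left)
      finally show "(if insert v \<tau> \<in> K then incidence_sign v \<tau> * cone w b (insert v \<tau>) else 0)
          = - incidence_sign w \<tau>0 *
            (if insert v \<tau>0 \<in> ?L then incidence_sign v \<tau>0 * b (insert v \<tau>0) else 0)"
        using inL by simp
    qed
    also have "\<dots> = - incidence_sign w \<tau>0 * bdry ?L b \<tau>0"
      using \<tau>0L by (simp add: bdry_eq sum_distrib_left)
    also have "\<dots> = - cone w (bdry ?L b) \<tau>"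
      using \<tau> by (simp add: cone_insert)
    finally show ?thesis .
  qed
qed

lemma cycle_cone_decomposition:
  fixes z :: "'a::linorder set \<Rightarrow> 'k::field"
  assumes K: "simplicial_complex K" and z: "z \<in> chains K d" "bdry K z = (\<lambda>_. 0)"
  obtains a b where "a \<in> chains (deletion K w) d" "b \<in> chains (link K w) (d - 1)"
    "z = (\<lambda>\<sigma>. a \<sigma> + cone w b \<sigma>)"
    "bdry (deletion K w) a = (\<lambda>\<tau>. - b \<tau>)" "bdry (link K w) b = (\<lambda>_. 0)"
proof -
  let ?D = "deletion K w" and ?L = "link K w"
  define a where "a \<sigma> = (if w \<in> \<sigma> then 0 else z \<sigma>)" for \<sigma>
  define b where "b \<tau> = (if w \<in> \<tau> then 0 else incidence_sign w \<tau> * z (insert w \<tau>))" for \<tau>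
  have z_eq: "z = (\<lambda>\<sigma>. a \<sigma> + cone w b \<sigma>)"
  proof
    fix \<sigma>
    show "z \<sigma> = a \<sigma> + cone w b \<sigma>"
      by (cases "w \<in> \<sigma>")
        (simp_all add: a_def b_def cone_def insert_absorb mult.assoc[symmetric] incidence_sign_square)
  qed
  have a: "a \<in> chains ?D d"
    using z(1) by (auto simp: chains_def deletion_def a_def)
  have b: "b \<in> chains ?L (d - 1)"
    unfolding chains_def
  proof (intro CollectI allI impI)
    fix \<tau> assume "b \<tau> \<noteq> 0"
    then have w: "w \<notin> \<tau>" and "z (insert w \<tau>) \<noteq> 0" by (auto simp: b_def split: if_splits)
    then have "insert w \<tau> \<in> K" "int (card (insert w \<tau>)) = d + 1"
      using z(1) unfolding chains_def by auto
    moreover have "finite \<tau>"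
      using simplicial_complex_finite_faces[OF K \<open>insert w \<tau> \<in> K\<close>] by simp
    ultimately show "\<tau> \<in> ?L \<and> int (card \<tau>) = d - 1 + 1" using w by (simp add: link_def)
  qed
  have finK: "finite (\<Union>K)" using K by (simp add: simplicial_complex_def)
  have bdry_a: "bdry K a = bdry ?D a"
    by (rule bdry_subcomplex[OF simplicial_complex_deletion[OF K] deletion_subset finK a])
  have bdry_a_apex: "bdry ?D a \<tau> = 0" if "w \<in> \<tau>" for \<tau>
    using that by (simp add: bdry_outside deletion_def)
  have cycle: "bdry ?D a \<tau> + bdry K (cone w b) \<tau> = 0" for \<tau>
    using fun_cong[OF z(2), of \<tau>] unfolding z_eq bdry_add bdry_a by simp
  have "bdry ?D a = (\<lambda>\<tau>. - b \<tau>)"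
  proof
    fix \<tau>
    show "bdry ?D a \<tau> = - b \<tau>"
      using cycle[of \<tau>] bdry_cone_apex_free[OF K b, of \<tau>] bdry_a_apex[of \<tau>]
      by (cases "w \<in> \<tau>") (auto simp: b_def eq_neg_iff_add_eq_0)
  qed
  moreover have "bdry ?L b = (\<lambda>_. 0)"
  proof
    fix \<tau>
    show "bdry ?L b \<tau> = 0"
    proof (cases "w \<in> \<tau>")
      case True
      then show ?thesis by (simp add: bdry_outside link_def)
    next
      case False
      have "cone w (bdry ?L b) (insert w \<tau>) = 0"
        using cycle[of "insert w \<tau>"] bdry_cone_apex[OF K b, of "insert w \<tau>"] bdry_a_apex by simp
      then show ?thesis using False by (simp add: cone_insert incidence_sign_nonzero)
    qed
  qed
  ultimately show thesis using that a b z_eq by blast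
qed

text \<open>The chain-level content of the long exact sequence of the pair formed by a complex and
  the deletion of a vertex, whose relative homology is that of the link shifted by one.\<close>
theorem red_homology_nonzero_deletion_or_link:
  assumes K: "simplicial_complex K" and nz: "red_homology_nonzero TYPE('k::field) K d"
  shows "red_homology_nonzero TYPE('k) (deletion K w) d \<or>
    (red_homology_nonzero TYPE('k) (link K w) (d - 1) \<and> link K w \<noteq> deletion K w)"
proof -
  let ?D = "deletion K w" and ?L = "link K w"
  obtain z :: "'a set \<Rightarrow> 'k" where z: "z \<in> chains K d" "bdry K z = (\<lambda>_. 0)"
    and z_not_bdry: "\<forall>y\<in>chains K (d + 1). bdry K y \<noteq> z"
    using nz unfolding red_homology_nonzero_def by blast
  obtain a b where a: "a \<in> chains ?D d" and b: "b \<in> chains ?L (d - 1)"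
    and z_eq: "z = (\<lambda>\<sigma>. a \<sigma> + cone w b \<sigma>)"
    and bdry_a: "bdry ?D a = (\<lambda>\<tau>. - b \<tau>)" and bdry_b: "bdry ?L b = (\<lambda>_. 0)"
    using cycle_cone_decomposition[OF K z] .
  have D: "simplicial_complex ?D" and L: "simplicial_complex ?L"
    using K by (simp_all add: simplicial_complex_deletion simplicial_complex_link)
  have LD: "?L \<subseteq> ?D" using link_subset_deletion[OF K] .
  have finK: "finite (\<Union>K)" and finD: "finite (\<Union>?D)"
    using K D by (simp_all add: simplicial_complex_def)
  show ?thesis
  proof (cases "\<exists>c\<in>chains ?L d. bdry ?L c = b")
    case True
    then obtain c where c: "c \<in> chains ?L d" and bdry_c: "bdry ?L c = b" by blast
    define z' where "z' = (\<lambda>\<sigma>. a \<sigma> + c \<sigma>)"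
    have z': "z' \<in> chains ?D d"
      unfolding z'_def using chains_add[OF a subsetD[OF chains_mono[OF LD] c]] .
    have "bdry ?D z' = (\<lambda>_. 0)"
      unfolding z'_def bdry_add bdry_a bdry_subcomplex[OF L LD finD c] bdry_c by simp
    moreover have "bdry ?D y \<noteq> z'" if y: "y \<in> chains ?D (d + 1)" for y
    proof
      assume bdry_y: "bdry ?D y = z'"
      have "(\<lambda>\<sigma>. y \<sigma> - cone w c \<sigma>) \<in> chains K (d + 1)"
        using chains_diff[OF subsetD[OF chains_mono[OF deletion_subset] y] cone_in_chains[OF K c]] .
      moreover have "bdry K (\<lambda>\<sigma>. y \<sigma> - cone w c \<sigma>) = z"
      proof
        fix \<tau>
        have "bdry K (\<lambda>\<sigma>. y \<sigma> - cone w c \<sigma>) \<tau> = a \<tau> + c \<tau> - bdry K (cone w c) \<tau>"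
          unfolding bdry_diff bdry_subcomplex[OF D deletion_subset finK y] bdry_y z'_def ..
        also have "\<dots> = z \<tau>"
        proof (cases "w \<in> \<tau>")
          case True
          then have "a \<tau> = 0" "c \<tau> = 0"
            using chains_nonzero[OF a] chains_nonzero[OF c] by (auto simp: deletion_def link_def)
          then show ?thesis
            using True bdry_cone_apex[OF K c True] by (simp add: z_eq bdry_c)
        next
          case False
          then show ?thesis
            using bdry_cone_apex_free[OF K c False] by (simp add: z_eq cone_apex_free)
        qed
        finally show "bdry K (\<lambda>\<sigma>. y \<sigma> - cone w c \<sigma>) \<tau> = z \<tau>" .
      qed
      ultimately show False using z_not_bdry by blast
    qed
    ultimately show ?thesis
      using z' unfolding red_homology_nonzero_def by blast
  next
    case False
    then have "red_homology_nonzero TYPE('k) ?L (d - 1)"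
      using b bdry_b unfolding red_homology_nonzero_def by auto
    moreover have "?L \<noteq> ?D"
    proof
      assume "?L = ?D"
      then have "(\<lambda>\<sigma>. - a \<sigma>) \<in> chains ?L d" "bdry ?L (\<lambda>\<sigma>. - a \<sigma>) = b"
        using chains_uminus[OF a] by (simp_all add: bdry_uminus bdry_a)
      then show False using False by blast
    qed
    ultimately show ?thesis by blast
  qed
qed

lemma red_homology_nonzero_face:
  assumes "red_homology_nonzero (k::'k::field itself) K d"
  shows "\<exists>\<sigma>\<in>K. int (card \<sigma>) = d + 1"
proof -
  obtain z :: "'a set \<Rightarrow> 'k" where z: "z \<in> chains K d"
    and z_not_bdry: "\<forall>y\<in>chains K (d + 1). bdry K y \<noteq> z"
    using assms unfolding red_homology_nonzero_def by blast
  have "(\<lambda>_. 0::'k) \<in> chains K (d + 1)" by (simp add: chains_def)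
  then have "z \<noteq> (\<lambda>_. 0)" using z_not_bdry bdry_zero[of K] by fastforce
  then obtain \<sigma> where "z \<sigma> \<noteq> 0" by auto
  then show ?thesis using z unfolding chains_def by blast
qed

lemma red_homology_nonzero_empty_face: "red_homology_nonzero TYPE('k::field) {{}} (-1)"
proof -
  define z :: "'a::linorder set \<Rightarrow> 'k" where "z \<sigma> = (if \<sigma> = {} then 1 else 0)" for \<sigma>
  have bdry_vanishes: "bdry {{}} f = (\<lambda>_. 0)" for f :: "'a set \<Rightarrow> 'k"
    by (simp add: bdry_eq fun_eq_iff)
  have "z \<in> chains {{}} (-1)" by (auto simp: chains_def z_def)
  moreover have "z \<noteq> (\<lambda>_. 0)" by (metis z_def zero_neq_one)
  ultimately show ?thesis
    unfolding red_homology_nonzero_def bdry_vanishes by metis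
qed

definition closed_nbhd :: "'a set set \<Rightarrow> 'a \<Rightarrow> 'a set" where
  "closed_nbhd E w = insert w {x. {x, w} \<in> E}"

lemma simplicial_complex_ind_complex: "finite S \<Longrightarrow> simplicial_complex (ind_complex E S)"
  unfolding simplicial_complex_def ind_complex_def
  by (auto intro: finite_subset[of _ S] dest: subset_trans)

lemma deletion_ind_complex: "deletion (ind_complex E S) w = ind_complex E (S - {w})"
  unfolding deletion_def ind_complex_def by auto

text \<open>In terms of the regularity: reg(G[X]) \<ge> d + 1.\<close>
definition induced_homology_nonzero ::
    "'k::field itself \<Rightarrow> 'a::linorder set set \<Rightarrow> 'a set \<Rightarrow> int \<Rightarrow> bool" where
  "induced_homology_nonzero k E X d \<longleftrightarrow> (\<exists>S\<subseteq>X. red_homology_nonzero k (ind_complex E S) d)"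

definition induced_edges :: "'a set set \<Rightarrow> 'a set \<Rightarrow> 'a set set" where
  "induced_edges E W = {e\<in>E. e \<subseteq> W}"

lemma finite_induced_matchings: "finite F \<Longrightarrow> finite {M. induced_matching F M}"
  by (rule finite_subset[of _ "Pow F"]) (auto simp: induced_matching_def)

lemma induced_matching_number_ge:
  "finite F \<Longrightarrow> induced_matching F M \<Longrightarrow> card M \<le> induced_matching_number F"
  unfolding induced_matching_number_def by (auto intro: Max_ge finite_induced_matchings)

lemma induced_matching_number_attained:
  assumes "finite F" "{} \<notin> F"
  obtains M where "induced_matching F M" "card M = induced_matching_number F"
proof -
  have "induced_matching F {}" using assms(2) by (auto simp: induced_matching_def)
  then have "induced_matching_number F \<in> card ` {M. induced_matching F M}"
    unfolding induced_matching_number_def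
    by (intro Max_in) (auto intro: finite_induced_matchings[OF assms(1)])
  then obtain M where "induced_matching F M" "card M = induced_matching_number F" by auto
  then show thesis by (rule that)
qed

lemma induced_matching_induced_edges_mono:
  assumes "induced_matching (induced_edges E A) M" "A \<subseteq> B"
  shows "induced_matching (induced_edges E B) M"
proof -
  have "\<Union>M \<subseteq> A" using assms(1) by (auto simp: induced_matching_def induced_edges_def)
  then show ?thesis using assms by (auto simp: induced_matching_def induced_edges_def)
qed

context
  fixes V :: "'a::linorder set" and E :: "'a set set"
  assumes graph: "simple_graph V E"
begin

lemma card_edge: "e \<in> E \<Longrightarrow> card e = 2"
  using graph by (simp add: simple_graph_def)

lemma edge_doubleton:
  assumes "e \<in> E" "w \<in> e" obtains x where "e = {x, w}" "x \<noteq> w"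
proof -
  obtain x y where "e = {x, y}" "x \<noteq> y" using card_edge[OF assms(1)] by (meson card_2_iff)
  then show thesis using that assms(2) by (auto simp: insert_commute)
qed

lemma finite_vertices: "finite V"
  using graph by (simp add: simple_graph_def)

lemma finite_edges: "finite E"
  using graph unfolding simple_graph_def by (meson Pow_iff finite_Pow_iff finite_subset subsetI)

lemma ind_complex_empty: "ind_complex E {} = {{}}"
  using card_edge by (force simp: ind_complex_def)

lemma link_ind_complex:
  assumes "w \<in> S"
  shows "link (ind_complex E S) w = ind_complex E (S - closed_nbhd E w)"
proof (intro equalityI subsetI)
  fix \<sigma> assume "\<sigma> \<in> link (ind_complex E S) w"
  then have w: "w \<notin> \<sigma>" and indep: "insert w \<sigma> \<subseteq> S" "\<forall>e\<in>E. \<not> e \<subseteq> insert w \<sigma>"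
    by (simp_all add: link_def ind_complex_def)
  have "\<sigma> \<subseteq> S - closed_nbhd E w"
  proof
    fix x assume x: "x \<in> \<sigma>"
    then have "{x, w} \<subseteq> insert w \<sigma>" by blast
    then have "{x, w} \<notin> E" using indep(2) by blast
    then show "x \<in> S - closed_nbhd E w" using x w indep(1) by (auto simp: closed_nbhd_def)
  qed
  moreover have "\<forall>e\<in>E. \<not> e \<subseteq> \<sigma>" using indep(2) by blast
  ultimately show "\<sigma> \<in> ind_complex E (S - closed_nbhd E w)" by (simp add: ind_complex_def)
next
  fix \<sigma> assume "\<sigma> \<in> ind_complex E (S - closed_nbhd E w)"
  then have \<sigma>: "\<sigma> \<subseteq> S - closed_nbhd E w" "\<forall>e\<in>E. \<not> e \<subseteq> \<sigma>"
    by (auto simp: ind_complex_def)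
  have "\<not> e \<subseteq> insert w \<sigma>" if e: "e \<in> E" for e
  proof
    assume sub: "e \<subseteq> insert w \<sigma>"
    show False
    proof (cases "w \<in> e")
      case True
      then obtain x where ex: "e = {x, w}" "x \<noteq> w" using edge_doubleton[OF e] by blast
      then have "x \<in> \<sigma>" using sub by blast
      moreover have "x \<in> closed_nbhd E w" using e ex by (simp add: closed_nbhd_def)
      ultimately show False using \<sigma>(1) by blast
    qed (use sub e \<sigma>(2) in blast)
  qed
  moreover have "w \<notin> \<sigma>" "insert w \<sigma> \<subseteq> S" using \<sigma>(1) assms by (auto simp: closed_nbhd_def)
  ultimately show "\<sigma> \<in> link (ind_complex E S) w" by (simp add: link_def ind_complex_def)
qed

lemma induced_homology_nonzero_delete_or_link:
  assumes X: "finite X" and nz: "induced_homology_nonzero TYPE('k::field) E X d"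
  shows "induced_homology_nonzero TYPE('k) E (X - {w}) d \<or>
    (induced_homology_nonzero TYPE('k) E (X - closed_nbhd E w) (d - 1) \<and> (\<exists>x\<in>X. {x, w} \<in> E))"
proof -
  obtain S where SX: "S \<subseteq> X" and S: "red_homology_nonzero TYPE('k) (ind_complex E S) d"
    using nz unfolding induced_homology_nonzero_def by blast
  show ?thesis
  proof (cases "w \<in> S")
    case False
    then show ?thesis using SX S unfolding induced_homology_nonzero_def by blast
  next
    case True
    have "simplicial_complex (ind_complex E S)"
      using X SX by (simp add: simplicial_complex_ind_complex finite_subset)
    from red_homology_nonzero_deletion_or_link[OF this S, of w]
    show ?thesis
    proof (elim disjE conjE)
      assume "red_homology_nonzero TYPE('k) (deletion (ind_complex E S) w) d"
      moreover have "S - {w} \<subseteq> X - {w}" using SX by blast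
      ultimately show ?thesis unfolding deletion_ind_complex induced_homology_nonzero_def by blast
    next
      assume link: "red_homology_nonzero TYPE('k) (link (ind_complex E S) w) (d - 1)"
        and link_ne: "link (ind_complex E S) w \<noteq> deletion (ind_complex E S) w"
      have "S - closed_nbhd E w \<noteq> S - {w}"
        using link_ne unfolding link_ind_complex[OF True] deletion_ind_complex by metis
      then have "\<exists>x\<in>S. {x, w} \<in> E" by (auto simp: closed_nbhd_def)
      moreover have "S - closed_nbhd E w \<subseteq> X - closed_nbhd E w" using SX by blast
      ultimately show ?thesis
        using link SX unfolding link_ind_complex[OF True] induced_homology_nonzero_def by blast
    qed
  qed
qed

lemma induced_homology_nonzero_delete_set:
  assumes X: "finite X" and N: "finite N" and nz: "induced_homology_nonzero TYPE('k::field) E X d"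
  shows "induced_homology_nonzero TYPE('k) E (X - N) d \<or>
    (\<exists>w\<in>N. \<exists>Y c. Y \<subseteq> X - closed_nbhd E w - N \<and> c \<le> card N \<and>
       induced_homology_nonzero TYPE('k) E Y (d - int c))"
  using N
proof (induction N rule: finite_induct)
  case empty
  then show ?case using nz by simp
next
  case (insert w N)
  have w_nbhd: "w \<in> closed_nbhd E w" by (simp add: closed_nbhd_def)
  from insert.IH show ?case
  proof (elim disjE exE bexE conjE)
    assume "induced_homology_nonzero TYPE('k) E (X - N) d"
    from induced_homology_nonzero_delete_or_link[OF finite_Diff[OF X] this, of w]
    show ?case
    proof (elim disjE conjE)
      assume "induced_homology_nonzero TYPE('k) E (X - N - {w}) d"
      moreover have "X - N - {w} = X - insert w N" by blast
      ultimately show ?case by simp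
    next
      assume "induced_homology_nonzero TYPE('k) E (X - N - closed_nbhd E w) (d - 1)"
      moreover have "X - N - closed_nbhd E w \<subseteq> X - closed_nbhd E w - insert w N"
        using w_nbhd by blast
      ultimately show ?case using insert.hyps
        by (intro disjI2 bexI[of _ w] exI[of _ "X - N - closed_nbhd E w"] exI[of _ 1]) auto
    qed
  next
    fix w' Y c
    assume w': "w' \<in> N" and Y: "Y \<subseteq> X - closed_nbhd E w' - N" and c: "c \<le> card N"
      and nzY: "induced_homology_nonzero TYPE('k) E Y (d - int c)"
    have "finite Y" using Y X finite_subset by blast
    from induced_homology_nonzero_delete_or_link[OF this nzY, of w]
    show ?case
    proof (elim disjE conjE)
      assume "induced_homology_nonzero TYPE('k) E (Y - {w}) (d - int c)"
      then show ?case using w' Y c insert.hyps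
        by (intro disjI2 bexI[of _ w'] exI[of _ "Y - {w}"] exI[of _ c]) auto
    next
      assume "induced_homology_nonzero TYPE('k) E (Y - closed_nbhd E w) (d - int c - 1)"
      then show ?case using w' Y c insert.hyps w_nbhd
        by (intro disjI2 bexI[of _ w'] exI[of _ "Y - closed_nbhd E w"] exI[of _ "c + 1"])
          (auto simp: algebra_simps)
    qed
  qed
qed

lemma induced_homology_nonzero_empty:
  "induced_homology_nonzero TYPE('k::field) E {} d \<Longrightarrow> d = -1"
  using red_homology_nonzero_face[of "TYPE('k)" "ind_complex E {}" d]
  by (auto simp: induced_homology_nonzero_def ind_complex_empty)

lemma finite_induced_edges: "finite (induced_edges E W)"
  using finite_edges by (simp add: induced_edges_def)

lemma empty_notin_induced_edges: "{} \<notin> induced_edges E W"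
  using card_edge by (force simp: induced_edges_def)

lemma induced_edges_vertices: "induced_edges E V = E"
  using graph by (auto simp: induced_edges_def simple_graph_def)

lemma induced_matching_number_mono:
  assumes "A \<subseteq> B"
  shows "induced_matching_number (induced_edges E A) \<le> induced_matching_number (induced_edges E B)"
proof -
  obtain M where "induced_matching (induced_edges E A) M"
    and "card M = induced_matching_number (induced_edges E A)"
    using induced_matching_number_attained finite_induced_edges empty_notin_induced_edges by blast
  then show ?thesis
    using induced_matching_induced_edges_mono[OF _ assms] induced_matching_number_ge finite_induced_edges
    by metis
qed

lemma induced_matching_insert_edge:
  assumes M: "induced_matching (induced_edges E Y) M" and uw: "{u, w} \<in> E" "u \<in> W" "w \<in> W"
    and Y: "Y \<subseteq> W" "Y \<inter> closed_nbhd E u = {}" "Y \<inter> closed_nbhd E w = {}"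
  shows "induced_matching (induced_edges E W) (insert {u, w} M)"
proof -
  have M_edges: "M \<subseteq> induced_edges E Y"
    and M_disjoint: "\<forall>e\<in>M. \<forall>f\<in>M. e \<noteq> f \<longrightarrow> e \<inter> f = {}"
    and M_induced: "\<forall>e\<in>induced_edges E Y. e \<subseteq> \<Union>M \<longrightarrow> e \<in> M"
    using M by (simp_all add: induced_matching_def)
  have UM: "\<Union>M \<subseteq> Y" using M_edges by (auto simp: induced_edges_def)
  have "u \<notin> Y" "w \<notin> Y" using Y by (auto simp: closed_nbhd_def)
  then have uw_disjoint: "{u, w} \<inter> f = {}" if "f \<in> M" for f using that UM by blast
  have induced: "e \<in> insert {u, w} M" if e: "e \<in> E" "e \<subseteq> {u, w} \<union> \<Union>M" for e
  proof (cases "e \<subseteq> \<Union>M")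
    case True
    then show ?thesis using M_induced e(1) UM by (auto simp: induced_edges_def)
  next
    case False
    then obtain a where a: "a \<in> e" "a \<in> {u, w}" using e(2) by blast
    then obtain x where ex: "e = {x, a}" "x \<noteq> a" using edge_doubleton[OF e(1)] by blast
    show ?thesis
    proof (cases "x \<in> {u, w}")
      case True
      then show ?thesis using a ex by auto
    next
      case False
      then have "x \<in> Y" using e(2) ex UM by blast
      moreover have "x \<in> closed_nbhd E a" using e(1) ex by (simp add: closed_nbhd_def)
      ultimately show ?thesis using a Y by blast
    qed
  qed
  show ?thesis
    unfolding induced_matching_def
  proof (intro conjI)
    show "insert {u, w} M \<subseteq> induced_edges E W"
      using M_edges uw Y(1) by (auto simp: induced_edges_def)
    show "\<forall>e\<in>insert {u, w} M. \<forall>f\<in>insert {u, w} M. e \<noteq> f \<longrightarrow> e \<inter> f = {}"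
      using M_disjoint uw_disjoint by blast
    show "\<forall>e\<in>induced_edges E W. e \<subseteq> \<Union>(insert {u, w} M) \<longrightarrow> e \<in> insert {u, w} M"
      using induced by (simp add: induced_edges_def)
  qed
qed

lemma induced_matching_number_insert_edge:
  assumes "{u, w} \<in> E" "u \<in> W" "w \<in> W"
    and "Y \<subseteq> W" "Y \<inter> closed_nbhd E u = {}" "Y \<inter> closed_nbhd E w = {}"
  shows "induced_matching_number (induced_edges E Y) + 1 \<le> induced_matching_number (induced_edges E W)"
proof -
  obtain M where M: "induced_matching (induced_edges E Y) M"
    and card_M: "card M = induced_matching_number (induced_edges E Y)"
    using induced_matching_number_attained finite_induced_edges empty_notin_induced_edges by blast
  have "M \<subseteq> induced_edges E Y" using M by (simp add: induced_matching_def)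
  moreover have "u \<notin> Y" using assms(5) by (auto simp: closed_nbhd_def)
  ultimately have "{u, w} \<notin> M" by (auto simp: induced_edges_def)
  moreover have "finite M"
    using M finite_induced_edges by (auto simp: induced_matching_def intro: finite_subset)
  ultimately have "card (insert {u, w} M) = card M + 1" by simp
  then show ?thesis
    using induced_matching_number_ge[OF finite_induced_edges
        induced_matching_insert_edge[OF M assms]] card_M by simp
qed

lemma card_neighbours_le_max_degree:
  assumes "u \<in> V" shows "card {x\<in>W. {x, u} \<in> E} \<le> max_degree V E"
proof -
  have "{x. {x, u} \<in> E} \<subseteq> V" using graph by (auto simp: simple_graph_def)
  then have "card {x\<in>W. {x, u} \<in> E} \<le> degree E u"
    unfolding degree_def using finite_vertices by (auto intro: card_mono finite_subset)
  also have "\<dots> \<le> max_degree V E"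
    using assms finite_vertices by (auto simp: max_degree_def)
  finally show ?thesis .
qed

lemma induced_homology_nonzero_bound:
  assumes "W \<subseteq> V" "induced_homology_nonzero TYPE('k::field) E W d"
  shows "d + 1 \<le> int (max_degree V E * induced_matching_number (induced_edges E W))"
  using assms
proof (induction "card W" arbitrary: W d rule: less_induct)
  case less
  let ?D = "max_degree V E" and ?im = "\<lambda>X. induced_matching_number (induced_edges E X)"
  have W: "finite W" using less.prems(1) finite_vertices finite_subset by blast
  have IH: "d' + 1 \<le> int (?D * ?im X)"
    if "X \<subseteq> W" "X \<noteq> W" "induced_homology_nonzero TYPE('k) E X d'" for X d'
    using less.hyps[of X d'] psubset_card_mono[OF W] that less.prems(1) by auto
  have im_mono: "int (?D * ?im X) \<le> int (?D * ?im W)" if "X \<subseteq> W" for X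
    unfolding of_nat_le_iff by (rule mult_le_mono2[OF induced_matching_number_mono[OF that]])
  consider (edge) u x where "u \<in> W" "x \<in> W" "{x, u} \<in> E" | (edgeless) "\<forall>u\<in>W. \<forall>x\<in>W. {x, u} \<notin> E"
    by blast
  then show ?case
  proof cases
    case (edge u x)
    define N where "N = {x\<in>W. {x, u} \<in> E}"
    have N: "finite N" "card N \<le> ?D" "x \<in> N"
      using W edge card_neighbours_le_max_degree[of u W] less.prems(1) by (auto simp: N_def)
    from induced_homology_nonzero_delete_set[OF W N(1) less.prems(2)]
    show ?thesis
    proof (elim disjE bexE exE conjE)
      assume nz: "induced_homology_nonzero TYPE('k) E (W - N) d"
      have "x \<notin> W - N" using N(3) by blast
      then have "W - N \<noteq> W" using edge(2) by blast
      then have "d + 1 \<le> int (?D * ?im (W - N))" using IH[OF Diff_subset _ nz] by blast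
      also have "\<dots> \<le> int (?D * ?im W)" by (rule im_mono[OF Diff_subset])
      finally show ?thesis .
    next
      fix w Y c
      assume w: "w \<in> N" and Y: "Y \<subseteq> W - closed_nbhd E w - N" and c: "c \<le> card N"
        and nz_Y: "induced_homology_nonzero TYPE('k) E Y (d - int c)"
      have uw: "{u, w} \<in> E" "w \<in> W" using w by (auto simp: N_def insert_commute)
      then have u_nbhd: "u \<in> closed_nbhd E w" by (simp add: closed_nbhd_def)
      have Y_sub: "Y \<subseteq> W" "Y \<inter> closed_nbhd E w = {}" using Y by blast+
      have "u \<notin> Y" using Y u_nbhd by blast
      then have "Y \<noteq> W" using edge(1) by blast
      then have IH_Y: "d - int c + 1 \<le> int (?D * ?im Y)" using IH[OF Y_sub(1) _ nz_Y] by blast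
      have "Y \<inter> closed_nbhd E u = {}"
        using Y \<open>u \<notin> Y\<close> by (auto simp: closed_nbhd_def N_def)
      then have extend: "?im Y + 1 \<le> ?im W"
        using induced_matching_number_insert_edge[OF uw(1) edge(1) uw(2) Y_sub(1)] Y_sub(2) by blast
      have "int c \<le> int ?D" using c N(2) by simp
      then have "d + 1 \<le> int ?D + int (?D * ?im Y)" using IH_Y by linarith
      also have "\<dots> = int (?D * (?im Y + 1))" by (simp add: algebra_simps)
      also have "\<dots> \<le> int (?D * ?im W)" unfolding of_nat_le_iff using extend by (rule mult_le_mono2)
      finally show ?thesis .
    qed
  next
    case edgeless
    show ?thesis
    proof (cases "W = {}")
      case True
      then have "d = -1" using induced_homology_nonzero_empty less.prems(2) by blast
      then show ?thesis by simp
    next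
      case False
      then obtain w where w: "w \<in> W" by blast
      have "\<not> (\<exists>x\<in>W. {x, w} \<in> E)" using edgeless w by blast
      then have nz: "induced_homology_nonzero TYPE('k) E (W - {w}) d"
        using induced_homology_nonzero_delete_or_link[OF W less.prems(2), of w] by blast
      have "W - {w} \<noteq> W" using w by blast
      then have "d + 1 \<le> int (?D * ?im (W - {w}))" using IH[OF Diff_subset _ nz] by blast
      also have "\<dots> \<le> int (?D * ?im W)" by (rule im_mono[OF Diff_subset])
      finally show ?thesis .
    qed
  qed
qed

end

theorem mainTheorem10:
  fixes V :: "'a::linorder set" and E :: "'a set set"
  assumes "simple_graph V E"
  shows "reg TYPE('k::field) V E \<le> max_degree V E * induced_matching_number E"
proof -
  let ?A = "{j. \<exists>S\<subseteq>V. red_homology_nonzero TYPE('k) (ind_complex E S) (int j - 1)}"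
  have bound: "j \<le> max_degree V E * induced_matching_number E" if "j \<in> ?A" for j
  proof -
    have "induced_homology_nonzero TYPE('k) E V (int j - 1)"
      using that by (simp add: induced_homology_nonzero_def)
    then have "int j - 1 + 1 \<le> int (max_degree V E * induced_matching_number (induced_edges E V))"
      by (rule induced_homology_nonzero_bound[OF assms subset_refl])
    then show ?thesis by (simp add: induced_edges_vertices[OF assms] del: of_nat_mult)
  qed
  have "red_homology_nonzero TYPE('k) (ind_complex E {}) (int 0 - 1)"
    using red_homology_nonzero_empty_face by (simp add: ind_complex_empty[OF assms])
  then have "?A \<noteq> {}" by blast
  moreover have "finite ?A"
    using bound by (intro finite_subset[OF _ finite_atMost]) auto
  ultimately show ?thesis unfolding reg_def by (intro Max.boundedI bound)
qed

end
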